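(* Let $d\ge3$, $c\ge1$ and $\kappa\ge1$ be such that $\kappa/2-4dc>0$. For $n$ large enough, $$P\big(\mathcal{E}(f_N)\ge\kappa\,n^d\ln n,\ |R_N|\le cn^d\big)\le\exp\Big(-\big(\frac\kappa2-4dc\big)n^d\ln n\Big).$$
   Context: $P$ is the law of the simple random walk $(S_k)$ on $\mathbb{Z}^d$ from $0$. $N=n^{d+2}$. $R_N$ is the set of sites visited up to time $N$. $L_N(x)=\sum_{k=0}^{N-1}1_{\{S_k=x\}}$, $f_N=\sqrt{L_N}$, and $\mathcal{E}(f)=\frac1{2d}\sum_{y,z\in\mathbb{Z}^d,|y-z|=1}(f(y)-f(z))^2$ (ordered pairs). *)

theory Defs
  imports "HOL-Analysis.Analysis" "HOL-Probability.Probability"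
begin

text \<open>Points of the lattice Z^d are represented as functions nat => int vanishing
outside the coordinates 0..d-1.\<close>

definition lattice :: "nat \<Rightarrow> (nat \<Rightarrow> int) set" where
  "lattice d = {x. \<forall>j\<ge>d. x j = 0}"

definition unit_steps :: "nat \<Rightarrow> (nat \<Rightarrow> int) set" where
  "unit_steps d = {(\<lambda>j. if j = i then s else 0) | i s. i < d \<and> (s = 1 \<or> s = -1)}"

definition adjacent :: "nat \<Rightarrow> (nat \<Rightarrow> int) \<Rightarrow> (nat \<Rightarrow> int) \<Rightarrow> bool" where
  "adjacent d y z \<longleftrightarrow> y \<in> lattice d \<and> z \<in> lattice d \<and> (\<Sum>j<d. \<bar>y j - z j\<bar>) = 1"

text \<open>The set of step sequences of length N; under the simple random walk law
the first N increments are uniformly distributed on this set.\<close>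
definition walks :: "nat \<Rightarrow> nat \<Rightarrow> (nat \<Rightarrow> int) list set" where
  "walks d N = {xs. length xs = N \<and> set xs \<subseteq> unit_steps d}"

definition SRW :: "nat \<Rightarrow> nat \<Rightarrow> (nat \<Rightarrow> int) list pmf" where
  "SRW d N = pmf_of_set (walks d N)"

definition pos :: "(nat \<Rightarrow> int) list \<Rightarrow> nat \<Rightarrow> (nat \<Rightarrow> int)" where
  "pos xs k = (\<lambda>j. \<Sum>i<k. (xs ! i) j)"

definition range_set :: "(nat \<Rightarrow> int) list \<Rightarrow> nat \<Rightarrow> (nat \<Rightarrow> int) set" where
  "range_set xs N = pos xs ` {0..N}"

definition local_time :: "(nat \<Rightarrow> int) list \<Rightarrow> nat \<Rightarrow> (nat \<Rightarrow> int) \<Rightarrow> nat" where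
  "local_time xs N x = card {k. k < N \<and> pos xs k = x}"

definition dirichlet :: "nat \<Rightarrow> ((nat \<Rightarrow> int) \<Rightarrow> real) \<Rightarrow> real" where
  "dirichlet d f = (1 / (2 * real d)) *
     infsum (\<lambda>(y, z). (f y - f z)\<^sup>2) {(y, z). adjacent d y z}"

end

theory Submission
  imports Defs "HOL-Library.Function_Algebras"
begin

(* Change of measure. For a local-time profile p, the Markov chain jumping from x to a neighbour
   y with probability proportional to u y, where u = sqrt p (raised to 1/N off the support of p),
   gives each walk with profile p weight at least exp (E(sqrt p)/2) / ((2d)^N N^2 e): this
   follows from ln t <= t - 1 and from E(g) = 2N - (1/d) sum_x g x (sum_e g (x + e)) when
   g^2 = L_N. As these weights sum to 1, at most (2d)^N N^2 e^(1 - kappa n^d ln n / 2) walks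
   share such a profile. A range of at most m sites can be listed as a lattice animal grown from
   the origin, so there are at most (m+1) (2dm(N+1))^m profiles; for m <= c n^d and n large,
   this count times N^2 e is at most exp (4dc n^d ln n). *)

section \<open>Lattice steps and walks\<close>

lemma unit_steps_subset_lattice: "unit_steps d \<subseteq> lattice d"
  by (auto simp: unit_steps_def lattice_def)

lemma unit_steps_eq_image:
  "unit_steps d = (\<lambda>(i, s) j. if j = i then s else 0) ` ({..<d} \<times> {1, -1})"
  by (auto simp: unit_steps_def image_iff)

lemma finite_unit_steps: "finite (unit_steps d)"
  by (simp add: unit_steps_eq_image)

lemma card_unit_steps: "card (unit_steps d) = 2 * d"
proof -
  have "inj_on (\<lambda>(i, s) j. if j = i then s else 0::int) ({..<d} \<times> {1, -1})"
  proof (rule inj_onI, clarify)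
    fix i i' :: nat and s s' :: int
    assume eq: "(\<lambda>j. if j = i then s else 0::int) = (\<lambda>j. if j = i' then s' else 0)"
      and "s \<in> {1, -1}" "s' \<in> {1, -1}"
    then have "s \<noteq> 0" "s' \<noteq> 0" by auto
    with fun_cong [OF eq, of i] fun_cong [OF eq, of i'] show "i = i' \<and> s = s'"
      by (auto split: if_splits)
  qed
  then show ?thesis
    by (simp add: unit_steps_eq_image card_image card_cartesian_product)
qed

lemma unit_steps_iff: "e \<in> unit_steps d \<longleftrightarrow> e \<in> lattice d \<and> (\<Sum>j<d. \<bar>e j\<bar>) = 1"
proof
  assume "e \<in> unit_steps d"
  then obtain i s where "i < d" "s = 1 \<or> s = -1" "e = (\<lambda>j. if j = i then s else 0)"
    by (auto simp: unit_steps_def)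
  then show "e \<in> lattice d \<and> (\<Sum>j<d. \<bar>e j\<bar>) = 1"
    by (auto simp: lattice_def if_distrib cong: if_cong)
next
  assume e: "e \<in> lattice d \<and> (\<Sum>j<d. \<bar>e j\<bar>) = 1"
  then obtain i where i: "i < d" "e i \<noteq> 0"
    by (metis (no_types, lifting) abs_zero sum.neutral zero_neq_one lessThan_iff)
  have "\<bar>e i\<bar> + (\<Sum>j\<in>{..<d} - {i}. \<bar>e j\<bar>) = 1"
    using e i by (simp add: sum.remove)
  moreover have "(\<Sum>j\<in>{..<d} - {i}. \<bar>e j\<bar>) \<ge> 0" and "\<bar>e i\<bar> \<ge> 1"
    using i by (auto simp: sum_nonneg)
  ultimately have ei: "\<bar>e i\<bar> = 1" and rest: "(\<Sum>j\<in>{..<d} - {i}. \<bar>e j\<bar>) = 0"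
    by linarith+
  have "e j = 0" if "j \<noteq> i" for j
    using rest that e by (cases "j < d") (auto simp: sum_nonneg_eq_0_iff lattice_def)
  then have "e = (\<lambda>j. if j = i then e i else 0)" by auto
  with i ei show "e \<in> unit_steps d"
    unfolding unit_steps_def by (intro CollectI exI [of _ i] exI [of _ "e i"]) auto
qed

lemma lattice_add: "x \<in> lattice d \<Longrightarrow> y \<in> lattice d \<Longrightarrow> x + y \<in> lattice d"
  by (simp add: lattice_def)

lemma lattice_diff: "x \<in> lattice d \<Longrightarrow> y \<in> lattice d \<Longrightarrow> x - y \<in> lattice d"
  by (simp add: lattice_def)

lemma adjacent_iff: "adjacent d y z \<longleftrightarrow> y \<in> lattice d \<and> z - y \<in> unit_steps d"
proof -
  have "z \<in> lattice d \<longleftrightarrow> z - y \<in> lattice d" if "y \<in> lattice d"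
    using that lattice_add [of "z - y" d y] lattice_diff [of z d y] by auto
  then show ?thesis
    by (auto simp: adjacent_def unit_steps_iff abs_minus_commute)
qed

lemma pos_0 [simp]: "pos xs 0 = 0"
  by (simp add: pos_def fun_eq_iff)

lemma pos_Suc: "pos xs (Suc k) = pos xs k + xs ! k"
  by (simp add: pos_def fun_eq_iff)

lemma pos_append: "k \<le> length xs \<Longrightarrow> pos (xs @ ys) k = pos xs k"
  unfolding pos_def by (intro ext sum.cong) (auto simp: nth_append)

lemma pos_in_lattice: "set xs \<subseteq> unit_steps d \<Longrightarrow> k \<le> length xs \<Longrightarrow> pos xs k \<in> lattice d"
proof (induction k)
  case 0
  then show ?case by (simp add: lattice_def)
next
  case (Suc k)
  then have "xs ! k \<in> lattice d"
    using unit_steps_subset_lattice by (meson Suc_le_lessD nth_mem subset_iff)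
  with Suc show ?case unfolding pos_Suc by (intro lattice_add) auto
qed

lemma walks_Suc: "walks d (Suc N) = (\<lambda>(xs, e). xs @ [e]) ` (walks d N \<times> unit_steps d)"
proof (intro set_eqI iffI)
  fix ys assume ys: "ys \<in> walks d (Suc N)"
  then have "ys \<noteq> []" by (auto simp: walks_def)
  then obtain xs e where "ys = xs @ [e]" by (cases ys rule: rev_cases) auto
  with ys show "ys \<in> (\<lambda>(xs, e). xs @ [e]) ` (walks d N \<times> unit_steps d)"
    by (auto simp: walks_def image_iff)
qed (auto simp: walks_def)

lemma finite_walks: "finite (walks d N)"
  unfolding walks_def using finite_lists_length_eq [OF finite_unit_steps]
  by (simp add: conj_commute)

lemma card_walks: "card (walks d N) = (2 * d) ^ N"
  unfolding walks_def using card_lists_length_eq [OF finite_unit_steps]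
  by (simp add: conj_commute card_unit_steps)

section \<open>Tilted walks\<close>

definition nbr_sum :: "nat \<Rightarrow> ((nat \<Rightarrow> int) \<Rightarrow> real) \<Rightarrow> (nat \<Rightarrow> int) \<Rightarrow> real" where
  "nbr_sum d u x = (\<Sum>e\<in>unit_steps d. u (x + e))"

(* For positive u, the law of the first length xs steps of the Markov chain that jumps from x
   to the neighbour y with probability u y / nbr_sum d u x. *)
definition walk_weight :: "nat \<Rightarrow> ((nat \<Rightarrow> int) \<Rightarrow> real) \<Rightarrow> (nat \<Rightarrow> int) list \<Rightarrow> real" where
  "walk_weight d u xs = (\<Prod>i<length xs. u (pos xs (Suc i)) / nbr_sum d u (pos xs i))"

lemma nbr_sum_pos: "d \<ge> 1 \<Longrightarrow> (\<And>x. u x > 0) \<Longrightarrow> nbr_sum d u x > 0"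
  unfolding nbr_sum_def using finite_unit_steps card_unit_steps [of d]
  by (intro sum_pos) auto

lemma walk_weight_pos: "d \<ge> 1 \<Longrightarrow> (\<And>x. u x > 0) \<Longrightarrow> walk_weight d u xs > 0"
  unfolding walk_weight_def by (intro prod_pos ballI divide_pos_pos nbr_sum_pos) auto

lemma walk_weight_snoc:
  "walk_weight d u (xs @ [e]) =
     walk_weight d u xs * (u (pos xs (length xs) + e) / nbr_sum d u (pos xs (length xs)))"
proof -
  have "(\<Prod>i<length xs. u (pos (xs @ [e]) (Suc i)) / nbr_sum d u (pos (xs @ [e]) i)) =
      walk_weight d u xs"
    unfolding walk_weight_def by (intro prod.cong) (simp_all add: pos_append)
  moreover have "pos (xs @ [e]) (Suc (length xs)) = pos xs (length xs) + e"
    by (simp add: pos_Suc pos_append)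
  ultimately show ?thesis
    by (simp add: walk_weight_def pos_append)
qed

lemma sum_walk_weight:
  assumes "d \<ge> 1" "\<And>x. u x > 0"
  shows "(\<Sum>xs\<in>walks d N. walk_weight d u xs) = 1"
proof (induction N)
  case 0
  have "walks d 0 = {[]}" by (auto simp: walks_def)
  then show ?case by (simp add: walk_weight_def)
next
  case (Suc N)
  have "(\<Sum>ys\<in>walks d (Suc N). walk_weight d u ys) =
      (\<Sum>xs\<in>walks d N. \<Sum>e\<in>unit_steps d. walk_weight d u (xs @ [e]))"
    unfolding walks_Suc
    by (subst sum.reindex) (auto intro: inj_onI simp: sum.cartesian_product case_prod_unfold)
  also have "\<dots> = (\<Sum>xs\<in>walks d N. walk_weight d u xs)"
  proof (rule sum.cong [OF refl])
    fix xs
    let ?x = "pos xs (length xs)"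
    have "(\<Sum>e\<in>unit_steps d. walk_weight d u (xs @ [e])) =
        walk_weight d u xs * (\<Sum>e\<in>unit_steps d. u (?x + e)) / nbr_sum d u ?x"
      by (simp add: walk_weight_snoc sum_distrib_left sum_divide_distrib)
    also have "\<dots> = walk_weight d u xs"
    proof -
      have "nbr_sum d u ?x > 0" by (rule nbr_sum_pos) (use assms in auto)
      then show ?thesis unfolding nbr_sum_def [symmetric] by simp
    qed
    finally show "(\<Sum>e\<in>unit_steps d. walk_weight d u (xs @ [e])) = walk_weight d u xs" .
  qed
  finally show ?case using Suc.IH by simp
qed

section \<open>The Dirichlet form of a finitely supported function\<close>

lemma dirichlet_eq_finite_sum:
  fixes g :: "(nat \<Rightarrow> int) \<Rightarrow> real"
  assumes "finite F" "F \<subseteq> lattice d"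
    and constant_outside: "\<And>y e. y \<notin> F \<Longrightarrow> e \<in> unit_steps d \<Longrightarrow> g (y + e) = g y"
  shows "dirichlet d g = (\<Sum>y\<in>F. \<Sum>e\<in>unit_steps d. (g y - g (y + e))\<^sup>2) / (2 * real d)"
proof -
  define \<phi> where "\<phi> = (\<lambda>(y::nat \<Rightarrow> int, z). (g y - g z)\<^sup>2)"
  define Q where "Q = (\<lambda>(y, e). (y, y + e)) ` (F \<times> unit_steps d)"
  have "infsum \<phi> {(y, z). adjacent d y z} = infsum \<phi> Q"
  proof (rule infsum_cong_neutral)
    fix p assume "p \<in> {(y, z). adjacent d y z} - Q"
    then obtain y z where p: "p = (y, z)" and yz: "z - y \<in> unit_steps d" "(y, z) \<notin> Q"
      by (auto simp: adjacent_iff)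
    have "y \<notin> F"
    proof
      assume "y \<in> F"
      then have "(\<lambda>(y, e). (y, y + e)) (y, z - y) \<in> Q"
        using yz(1) unfolding Q_def by (intro imageI) simp
      with yz(2) show False by simp
    qed
    then show "\<phi> p = 0"
      using constant_outside [of y "z - y"] yz(1) by (simp add: \<phi>_def p)
  qed (use assms(2) in \<open>auto simp: Q_def adjacent_iff\<close>)
  also have "\<dots> = sum \<phi> Q"
    using assms(1) finite_unit_steps by (simp add: Q_def)
  also have "\<dots> = (\<Sum>(y, e)\<in>F \<times> unit_steps d. (g y - g (y + e))\<^sup>2)"
    unfolding Q_def by (subst sum.reindex) (auto intro!: inj_onI simp: \<phi>_def case_prod_unfold)
  finally show ?thesis
    by (simp add: dirichlet_def \<phi>_def sum.cartesian_product)
qed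

lemma sum_translate_eq:
  fixes h :: "'a::group_add \<Rightarrow> 'b::comm_monoid_add"
  assumes "finite F" "(\<lambda>y. y - e) ` S \<subseteq> F" "\<And>x. x \<notin> S \<Longrightarrow> h x = 0"
  shows "(\<Sum>y\<in>F. h (y + e)) = (\<Sum>y\<in>S. h y)"
proof -
  have "S \<subseteq> (\<lambda>y. y + e) ` F"
  proof
    fix x assume "x \<in> S"
    then have "x - e \<in> F" using assms(2) by blast
    then show "x \<in> (\<lambda>y. y + e) ` F" by (rule rev_image_eqI) simp
  qed
  then have "(\<Sum>y\<in>S. h y) = (\<Sum>x\<in>(\<lambda>y. y + e) ` F. h x)"
    using assms(1,3) by (intro sum.mono_neutral_left) auto
  also have "\<dots> = (\<Sum>y\<in>F. h (y + e))"
    by (simp add: sum.reindex)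
  finally show ?thesis ..
qed

lemma dirichlet_finite_support:
  fixes g :: "(nat \<Rightarrow> int) \<Rightarrow> real"
  assumes "finite S" "S \<subseteq> lattice d" and vanish: "\<And>x. x \<notin> S \<Longrightarrow> g x = 0"
  shows "dirichlet d g =
           (2 * real d * (\<Sum>y\<in>S. (g y)\<^sup>2) - (\<Sum>y\<in>S. g y * nbr_sum d g y)) / real d"
proof -
  let ?U = "unit_steps d"
  define F where "F = S \<union> (\<Union>e\<in>?U. (\<lambda>y. y - e) ` S)"
  have F: "finite F" "S \<subseteq> F"
    using assms(1) finite_unit_steps by (auto simp: F_def)
  have "F \<subseteq> lattice d"
    unfolding F_def using assms(2) unit_steps_subset_lattice by (blast intro: lattice_diff)
  have restrict: "(\<Sum>y\<in>F. h y) = (\<Sum>y\<in>S. h y)"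
    if "\<And>x. x \<notin> S \<Longrightarrow> h x = 0" for h :: "(nat \<Rightarrow> int) \<Rightarrow> real"
    using F that by (intro sum.mono_neutral_right) auto
  have "g (y + e) = g y" if "y \<notin> F" "e \<in> ?U" for y e
  proof -
    have "y + e \<notin> S"
      using that by (force simp: F_def)
    with that show ?thesis using F(2) vanish by auto
  qed
  then have "dirichlet d g = (\<Sum>y\<in>F. \<Sum>e\<in>?U. (g y - g (y + e))\<^sup>2) / (2 * real d)"
    using F \<open>F \<subseteq> lattice d\<close> by (intro dirichlet_eq_finite_sum) auto
  also have "(\<Sum>y\<in>F. \<Sum>e\<in>?U. (g y - g (y + e))\<^sup>2) =
      (\<Sum>e\<in>?U. (\<Sum>y\<in>F. (g y)\<^sup>2) + (\<Sum>y\<in>F. (g (y + e))\<^sup>2) - 2 * (\<Sum>y\<in>F. g y * g (y + e)))"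
    by (subst sum.swap)
      (simp add: power2_diff sum.distrib sum_subtractf sum_distrib_left mult.assoc)
  also have "\<dots> = (\<Sum>e\<in>?U. 2 * (\<Sum>y\<in>S. (g y)\<^sup>2) - 2 * (\<Sum>y\<in>S. g y * g (y + e)))"
  proof (rule sum.cong [OF refl])
    fix e assume e: "e \<in> ?U"
    have "(\<Sum>y\<in>F. (g (y + e))\<^sup>2) = (\<Sum>y\<in>S. (g y)\<^sup>2)"
      using F(1) e vanish by (intro sum_translate_eq) (auto simp: F_def)
    moreover have "(\<Sum>y\<in>F. (g y)\<^sup>2) = (\<Sum>y\<in>S. (g y)\<^sup>2)"
      by (rule restrict) (simp add: vanish)
    moreover have "(\<Sum>y\<in>F. g y * g (y + e)) = (\<Sum>y\<in>S. g y * g (y + e))"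
      by (rule restrict) (simp add: vanish)
    ultimately show "(\<Sum>y\<in>F. (g y)\<^sup>2) + (\<Sum>y\<in>F. (g (y + e))\<^sup>2) - 2 * (\<Sum>y\<in>F. g y * g (y + e))
        = 2 * (\<Sum>y\<in>S. (g y)\<^sup>2) - 2 * (\<Sum>y\<in>S. g y * g (y + e))"
      by simp
  qed
  also have "\<dots> = 2 * (2 * real d * (\<Sum>y\<in>S. (g y)\<^sup>2) - (\<Sum>y\<in>S. g y * nbr_sum d g y))"
  proof -
    have "(\<Sum>e\<in>?U. \<Sum>y\<in>S. g y * g (y + e)) = (\<Sum>y\<in>S. g y * nbr_sum d g y)"
      by (simp add: nbr_sum_def sum_distrib_left sum.swap [of _ ?U])
    then show ?thesis
      by (simp add: sum_subtractf card_unit_steps flip: sum_distrib_left)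
  qed
  finally show ?thesis
    by (simp only: mult_divide_mult_cancel_left_if) simp
qed

lemma local_time_eq_0: "x \<notin> pos xs ` {..<N} \<Longrightarrow> local_time xs N x = 0"
  unfolding local_time_def by (auto intro!: arg_cong [where f = card])

lemma local_time_ge_1: "x \<in> pos xs ` {..<N} \<Longrightarrow> local_time xs N x \<ge> 1"
  unfolding local_time_def by (auto simp: Suc_le_eq card_gt_0_iff)

lemma local_time_le: "local_time xs N x \<le> N"
  using card_mono [of "{..<N}" "{k. k < N \<and> pos xs k = x}"] by (auto simp: local_time_def)

lemma sum_steps_eq_sum_local_time:
  "(\<Sum>i<N. h (pos xs i)) = (\<Sum>x\<in>pos xs ` {..<N}. real (local_time xs N x) * h x)"
proof -
  have "(\<Sum>i<N. h (pos xs i)) =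
      (\<Sum>x\<in>pos xs ` {..<N}. \<Sum>i\<in>{i \<in> {..<N}. pos xs i = x}. h (pos xs i))"
    by (rule sum.image_gen) simp
  also have "\<dots> = (\<Sum>x\<in>pos xs ` {..<N}. real (local_time xs N x) * h x)"
    by (intro sum.cong refl) (simp add: local_time_def)
  finally show ?thesis .
qed

lemma sum_local_time: "(\<Sum>x\<in>pos xs ` {..<N}. real (local_time xs N x)) = real N"
  using sum_steps_eq_sum_local_time [where h = "\<lambda>_. 1"] by simp

lemma sqrt_of_nat_le: "sqrt (real k) \<le> real k"
proof -
  have "sqrt (real k) \<le> sqrt (real k * real k)"
    by (rule real_sqrt_le_mono) (cases k, simp_all)
  then show ?thesis by simp
qed

section \<open>Weight of a walk under its own tilt\<close>

definition tilt :: "nat \<Rightarrow> ((nat \<Rightarrow> int) \<Rightarrow> nat) \<Rightarrow> (nat \<Rightarrow> int) \<Rightarrow> real" where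
  "tilt N p x = (if p x = 0 then 1 / real N else sqrt (real (p x)))"

lemma tilt_pos: "N \<ge> 1 \<Longrightarrow> tilt N p x > 0"
  by (simp add: tilt_def)

lemma tilt_le: "tilt N p x \<le> sqrt (real (p x)) + 1 / real N"
  by (simp add: tilt_def)

lemma ln_tilt_ge: "N \<ge> 1 \<Longrightarrow> ln (tilt N p x) \<ge> - ln (real N)"
proof -
  assume N: "N \<ge> 1"
  have "1 / real N \<le> tilt N p x"
    using N by (auto simp: tilt_def intro: order_trans [of _ 1])
  then have "ln (1 / real N) \<le> ln (tilt N p x)"
    using N by (intro ln_mono) auto
  then show ?thesis
    using N by (simp add: ln_div)
qed

lemma ln_tilt_le: "N \<ge> 1 \<Longrightarrow> p x \<le> N \<Longrightarrow> ln (tilt N p x) \<le> ln (real N)"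
proof -
  assume N: "N \<ge> 1" and "p x \<le> N"
  then have "sqrt (real (p x)) \<le> real N"
    using sqrt_of_nat_le [of "p x"] by linarith
  then have "tilt N p x \<le> real N"
    using N by (auto simp: tilt_def intro: order_trans [of _ 1])
  then show ?thesis
    using N tilt_pos by (intro ln_mono) auto
qed

lemma nbr_sum_tilt_le:
  "nbr_sum d (tilt N p) x \<le> nbr_sum d (\<lambda>x. sqrt (real (p x))) x + 2 * real d / real N"
proof -
  have "nbr_sum d (tilt N p) x \<le> (\<Sum>e\<in>unit_steps d. sqrt (real (p (x + e))) + 1 / real N)"
    unfolding nbr_sum_def by (intro sum_mono tilt_le)
  then show ?thesis
    by (simp add: sum.distrib nbr_sum_def card_unit_steps)
qed

lemma ln_walk_weight_eq:
  assumes "d \<ge> 1" "\<And>x. u x > 0" "length xs = N"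
  shows "ln (walk_weight d u xs) = ln (u (pos xs N)) - ln (u (pos xs 0))
     + (\<Sum>x\<in>pos xs ` {..<N}. real (local_time xs N x) * (ln (u x) - ln (nbr_sum d u x)))"
proof -
  let ?f = "\<lambda>x. ln (u x) - ln (nbr_sum d u x)"
  have A: "nbr_sum d u x > 0" for x
    by (rule nbr_sum_pos) (use assms in auto)
  have nonzero: "u x \<noteq> 0" "nbr_sum d u x \<noteq> 0" for x
    using assms(2) A by (metis less_irrefl)+
  have "ln (walk_weight d u xs) = (\<Sum>i<N. ln (u (pos xs (Suc i)) / nbr_sum d u (pos xs i)))"
    unfolding walk_weight_def assms(3) by (rule ln_prod) (simp_all add: nonzero)
  also have "\<dots> = (\<Sum>i<N. ln (u (pos xs (Suc i))) - ln (nbr_sum d u (pos xs i)))"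
    by (simp add: ln_div nonzero)
  also have "\<dots> = (\<Sum>i<N. ln (u (pos xs (Suc i))) - ln (u (pos xs i))) + (\<Sum>i<N. ?f (pos xs i))"
    by (simp flip: sum.distrib)
  also have "(\<Sum>i<N. ln (u (pos xs (Suc i))) - ln (u (pos xs i))) =
      ln (u (pos xs N)) - ln (u (pos xs 0))"
    by (rule sum_lessThan_telescope)
  also have "(\<Sum>i<N. ?f (pos xs i)) = (\<Sum>x\<in>pos xs ` {..<N}. real (local_time xs N x) * ?f x)"
    by (rule sum_steps_eq_sum_local_time)
  finally show ?thesis .
qed

lemma sq_mul_ln_ratio_ge:
  fixes g a K :: real
  assumes "g > 0" "a > 0" "K > 0"
  shows "g\<^sup>2 * (ln g - ln a) \<ge> g\<^sup>2 * (1 - ln K) - g * a / K"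
proof -
  have "ln (a / (K * g)) \<le> a / (K * g) - 1"
    using assms by (intro ln_le_minus_one) simp
  then have "ln a - ln K - ln g \<le> a / (K * g) - 1"
    using assms by (simp add: ln_div ln_mult)
  then have "g\<^sup>2 * (ln a - ln K - ln g) \<le> g\<^sup>2 * (a / (K * g) - 1)"
    by (rule mult_left_mono) simp
  also have "\<dots> = g * a / K - g\<^sup>2"
    using assms by (simp add: power2_eq_square field_simps)
  finally show ?thesis
    by (simp add: algebra_simps)
qed

lemma dirichlet_sqrt_local_time:
  assumes "d \<ge> 1" "xs \<in> walks d N"
  defines "g \<equiv> \<lambda>x. sqrt (real (local_time xs N x))"
  shows "dirichlet d g = 2 * real N - (\<Sum>x\<in>pos xs ` {..<N}. g x * nbr_sum d g x) / real d"
proof -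
  have "pos xs ` {..<N} \<subseteq> lattice d"
    using assms(2) pos_in_lattice by (auto simp: walks_def)
  then have "dirichlet d g = (2 * real d * (\<Sum>x\<in>pos xs ` {..<N}. (g x)\<^sup>2)
      - (\<Sum>x\<in>pos xs ` {..<N}. g x * nbr_sum d g x)) / real d"
    by (intro dirichlet_finite_support) (auto simp: g_def local_time_eq_0)
  also have "(\<Sum>x\<in>pos xs ` {..<N}. (g x)\<^sup>2) = real N"
    unfolding g_def by (simp add: sum_local_time)
  finally show ?thesis
    using assms(1) by (simp add: field_simps)
qed

lemma sum_local_time_ln_ratio_tilt_ge:
  fixes xs :: "(nat \<Rightarrow> int) list"
  assumes d: "d \<ge> 1" and N: "N \<ge> 1"
  defines "L \<equiv> local_time xs N" and "g \<equiv> \<lambda>x. sqrt (real (local_time xs N x))"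
  shows "(\<Sum>x\<in>pos xs ` {..<N}. real (L x) * (ln (tilt N L x) - ln (nbr_sum d (tilt N L) x)))
           \<ge> real N * (1 - ln (2 * real d))
             - (\<Sum>x\<in>pos xs ` {..<N}. g x * nbr_sum d g x) / (2 * real d) - 1"
proof -
  define S where "S = pos xs ` {..<N}"
  define u where "u = tilt N L"
  define K where "K = 2 * real d"
  have K: "K > 0"
    using d by (simp add: K_def)
  have sum_L: "(\<Sum>x\<in>S. real (L x)) = real N"
    unfolding S_def L_def by (rule sum_local_time)
  have "(\<Sum>x\<in>S. g x) \<le> (\<Sum>x\<in>S. real (L x))"
    unfolding g_def L_def by (intro sum_mono sqrt_of_nat_le)
  then have sum_g: "(\<Sum>x\<in>S. g x) / real N \<le> 1"
    using N sum_L by simp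
  have local: "real (L x) * (ln (u x) - ln (nbr_sum d u x)) \<ge>
      real (L x) * (1 - ln K) - g x * nbr_sum d g x / K - g x / real N" if "x \<in> S" for x
  proof -
    have g: "g x > 0" "u x = g x" "(g x)\<^sup>2 = real (L x)"
      using local_time_ge_1 [of x xs N] that by (auto simp: S_def L_def g_def u_def tilt_def)
    have "real (L x) * (ln (u x) - ln (nbr_sum d u x)) \<ge>
        real (L x) * (1 - ln K) - g x * nbr_sum d u x / K"
      using sq_mul_ln_ratio_ge [of "g x" "nbr_sum d u x" K] g K
        nbr_sum_pos [OF d, of u] tilt_pos [OF N] by (simp add: u_def)
    moreover have "g x * nbr_sum d u x / K \<le> g x * (nbr_sum d g x + K / real N) / K"
      using g K nbr_sum_tilt_le [of d N L x]
      by (intro divide_right_mono mult_left_mono) (auto simp: u_def g_def L_def K_def)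
    moreover have "g x * (nbr_sum d g x + K / real N) / K = g x * nbr_sum d g x / K + g x / real N"
      using K by (simp add: field_simps)
    ultimately show ?thesis
      by linarith
  qed
  have "(\<Sum>x\<in>S. real (L x) * (ln (u x) - ln (nbr_sum d u x))) \<ge>
      (\<Sum>x\<in>S. real (L x) * (1 - ln K) - g x * nbr_sum d g x / K - g x / real N)"
    by (intro sum_mono local)
  also have "(\<Sum>x\<in>S. real (L x) * (1 - ln K) - g x * nbr_sum d g x / K - g x / real N) =
      real N * (1 - ln K) - (\<Sum>x\<in>S. g x * nbr_sum d g x) / K - (\<Sum>x\<in>S. g x) / real N"
    by (simp add: sum_subtractf sum_divide_distrib sum_L flip: sum_distrib_right)
  finally show ?thesis
    using sum_g unfolding S_def u_def K_def by linarith
qed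

lemma ln_walk_weight_tilt_ge:
  assumes d: "d \<ge> 1" and xs: "xs \<in> walks d N" and N: "N \<ge> 1"
  shows "ln (walk_weight d (tilt N (local_time xs N)) xs) \<ge>
           dirichlet d (\<lambda>x. sqrt (real (local_time xs N x))) / 2
           - real N * ln (2 * real d) - 2 * ln (real N) - 1"
proof -
  define L where "L = local_time xs N"
  define g where "g = (\<lambda>x. sqrt (real (L x)))"
  define u where "u = tilt N L"
  have ends: "ln (u (pos xs N)) \<ge> - ln (real N)" "ln (u (pos xs 0)) \<le> ln (real N)"
    using N local_time_le by (auto simp: u_def L_def intro: ln_tilt_ge ln_tilt_le)
  have "ln (walk_weight d u xs) = ln (u (pos xs N)) - ln (u (pos xs 0))
      + (\<Sum>x\<in>pos xs ` {..<N}. real (L x) * (ln (u x) - ln (nbr_sum d u x)))"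
    using xs tilt_pos [OF N] by (simp add: ln_walk_weight_eq [OF d] walks_def u_def L_def)
  moreover have "dirichlet d g / 2 =
      real N - (\<Sum>x\<in>pos xs ` {..<N}. g x * nbr_sum d g x) / (2 * real d)"
    using dirichlet_sqrt_local_time [OF d xs] by (simp add: g_def L_def)
  moreover have "real N * (1 - ln (2 * real d)) = real N - real N * ln (2 * real d)"
    by (simp add: algebra_simps)
  ultimately show ?thesis
    using sum_local_time_ln_ratio_tilt_ge [OF d N, of xs] ends
    unfolding u_def g_def L_def by linarith
qed

section \<open>Counting local-time profiles\<close>

(* Enumerations of lattice animals grown from the origin: each new site is a neighbour of an
   earlier one. *)
fun animal_enums :: "nat \<Rightarrow> nat \<Rightarrow> (nat \<Rightarrow> int) list set" where
  "animal_enums d 0 = {[]}"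
| "animal_enums d (Suc 0) = {[0]}"
| "animal_enums d (Suc (Suc k)) =
     (\<lambda>(ys, j, e). ys @ [ys ! j + e]) ` (animal_enums d (Suc k) \<times> {..<Suc k} \<times> unit_steps d)"

lemma length_animal_enums: "ys \<in> animal_enums d k \<Longrightarrow> length ys = k"
  by (induction d k arbitrary: ys rule: animal_enums.induct) auto

lemma finite_animal_enums: "finite (animal_enums d k)"
  by (induction d k rule: animal_enums.induct) (auto simp: finite_unit_steps)

lemma card_animal_enums_le: "d \<ge> 1 \<Longrightarrow> card (animal_enums d k) \<le> (2 * d * k) ^ k"
proof (induction d k rule: animal_enums.induct)
  case (3 d k)
  have "card (animal_enums d (Suc (Suc k))) \<le>
      card (animal_enums d (Suc k) \<times> {..<Suc k} \<times> unit_steps d)"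
    unfolding animal_enums.simps
    by (rule card_image_le) (simp add: finite_animal_enums finite_unit_steps)
  also have "\<dots> = card (animal_enums d (Suc k)) * (2 * d * Suc k)"
    by (simp add: card_cartesian_product card_unit_steps)
  also have "\<dots> \<le> (2 * d * Suc k) ^ Suc k * (2 * d * Suc k)"
    using 3 by (intro mult_right_mono) auto
  also have "\<dots> \<le> (2 * d * Suc (Suc k)) ^ Suc (Suc k)"
    unfolding power_Suc2 [symmetric] by (intro power_mono) auto
  finally show ?case .
qed auto

lemma visited_sites_animal_enum:
  assumes steps: "set xs \<subseteq> unit_steps d" and "1 \<le> k" "k \<le> length xs"
  shows "\<exists>ys \<in> animal_enums d (card (pos xs ` {..<k})). set ys = pos xs ` {..<k} \<and> distinct ys"
  using assms(2,3)
proof (induction k rule: nat_induct_at_least)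
  case base
  have visited: "pos xs ` {..<1} = {0}"
    by auto
  show ?case
    unfolding visited by simp
next
  case (Suc k)
  then obtain ys where ys: "ys \<in> animal_enums d (card (pos xs ` {..<k}))"
    "set ys = pos xs ` {..<k}" "distinct ys"
    by auto
  have visited: "pos xs ` {..<Suc k} = insert (pos xs k) (pos xs ` {..<k})"
    by (simp add: lessThan_Suc)
  show ?case
  proof (cases "pos xs k \<in> pos xs ` {..<k}")
    case True
    then show ?thesis
      unfolding visited insert_absorb [OF True] using ys by blast
  next
    case new: False
    have "pos xs 0 \<in> pos xs ` {..<k}"
      using Suc.hyps by (intro imageI) simp
    then have "card (pos xs ` {..<k}) > 0"
      by (auto simp: card_gt_0_iff)
    then obtain c where c: "card (pos xs ` {..<k}) = Suc c"
      using gr0_implies_Suc by blast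
    obtain i where k: "k = Suc i"
      using Suc.hyps by (cases k) auto
    then obtain j where j: "j < Suc c" "ys ! j = pos xs i"
      using ys(2) c length_animal_enums [OF ys(1)]
      by (metis in_set_conv_nth imageI lessI lessThan_iff)
    have "xs ! i \<in> unit_steps d"
      using steps Suc.prems k by auto
    then have "(ys, j, xs ! i) \<in> animal_enums d (Suc c) \<times> {..<Suc c} \<times> unit_steps d"
      using ys(1) c j by simp
    moreover have "ys @ [pos xs k] = ys @ [ys ! j + xs ! i]"
      by (simp add: k j pos_Suc)
    ultimately have "ys @ [pos xs k] \<in> animal_enums d (Suc (Suc c))"
      by (auto simp del: animal_enums.simps simp add: animal_enums.simps(3) image_iff)
    then show ?thesis
      using ys c new visited by (intro bexI [of _ "ys @ [pos xs k]"]) auto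
  qed
qed

definition profile_of :: "(nat \<Rightarrow> int) list \<Rightarrow> nat list \<Rightarrow> (nat \<Rightarrow> int) \<Rightarrow> nat" where
  "profile_of ys vs x = (case map_of (zip ys vs) x of None \<Rightarrow> 0 | Some v \<Rightarrow> v)"

lemma profile_of_local_time:
  "set ys = pos xs ` {..<N} \<Longrightarrow> profile_of ys (map (local_time xs N) ys) = local_time xs N"
  by (auto simp: fun_eq_iff profile_of_def map_of_zip_map local_time_eq_0)

definition profiles :: "nat \<Rightarrow> nat \<Rightarrow> nat \<Rightarrow> ((nat \<Rightarrow> int) \<Rightarrow> nat) set" where
  "profiles d N k = (\<lambda>(ys, vs). profile_of ys vs) `
     (animal_enums d k \<times> {vs. set vs \<subseteq> {0..N} \<and> length vs = k})"

lemma finite_profiles: "finite (profiles d N k)"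
  unfolding profiles_def by (simp add: finite_animal_enums finite_lists_length_eq)

lemma card_profiles_le: "d \<ge> 1 \<Longrightarrow> card (profiles d N k) \<le> (2 * d * k * (N + 1)) ^ k"
proof -
  assume "d \<ge> 1"
  have "card (profiles d N k) \<le> card (animal_enums d k) * (N + 1) ^ k"
    unfolding profiles_def
    using card_image_le [of "animal_enums d k \<times> {vs. set vs \<subseteq> {0..N} \<and> length vs = k}"]
    by (simp add: card_lists_length_eq finite_animal_enums finite_lists_length_eq)
  also have "\<dots> \<le> (2 * d * k) ^ k * (N + 1) ^ k"
    using \<open>d \<ge> 1\<close> by (intro mult_right_mono card_animal_enums_le) simp_all
  finally show ?thesis
    by (simp only: power_mult_distrib)
qed

lemma local_time_in_profiles:
  assumes "xs \<in> walks d N" "N \<ge> 1"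
  shows "local_time xs N \<in> profiles d N (card (pos xs ` {..<N}))"
proof -
  obtain ys where ys: "ys \<in> animal_enums d (card (pos xs ` {..<N}))" "set ys = pos xs ` {..<N}"
    using visited_sites_animal_enum [of xs d N] assms by (auto simp: walks_def)
  then have "(ys, map (local_time xs N) ys) \<in>
      animal_enums d (card (pos xs ` {..<N})) \<times>
      {vs. set vs \<subseteq> {0..N} \<and> length vs = card (pos xs ` {..<N})}"
    using length_animal_enums [OF ys(1)] local_time_le by auto
  then show ?thesis
    unfolding profiles_def using profile_of_local_time [OF ys(2)]
    by (intro rev_image_eqI [of "(ys, map (local_time xs N) ys)"]) auto
qed

lemma card_local_time_profiles_le:
  assumes "d \<ge> 1" "N \<ge> 1" "E \<subseteq> walks d N"
    and "\<And>xs. xs \<in> E \<Longrightarrow> card (pos xs ` {..<N}) \<le> m"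
  shows "card ((\<lambda>xs. local_time xs N) ` E) \<le> (m + 1) * (2 * d * m * (N + 1)) ^ m"
proof -
  have "(\<lambda>xs. local_time xs N) ` E \<subseteq> (\<Union>k\<le>m. profiles d N k)"
    using assms(2-4) local_time_in_profiles by blast
  then have "card ((\<lambda>xs. local_time xs N) ` E) \<le> card (\<Union>k\<le>m. profiles d N k)"
    by (intro card_mono) (auto simp: finite_profiles)
  also have "\<dots> \<le> (\<Sum>k\<le>m. card (profiles d N k))"
    by (rule card_UN_le) simp
  also have "\<dots> \<le> (\<Sum>k\<le>m. (2 * d * m * (N + 1)) ^ m)"
  proof (rule sum_mono)
    fix k assume "k \<in> {..m}"
    then have k: "k \<le> m" by simp
    have "card (profiles d N k) \<le> (2 * d * k * (N + 1)) ^ k"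
      using assms(1) by (rule card_profiles_le)
    also have "\<dots> \<le> (2 * d * m * (N + 1)) ^ k"
      using k by (intro power_mono mult_le_mono1 mult_le_mono2) auto
    also have "\<dots> \<le> (2 * d * m * (N + 1)) ^ m"
    proof (cases "m = 0")
      case False
      then have "0 < 2 * d * m * (N + 1)"
        using assms(1) by (intro mult_pos_pos) auto
      then have "1 \<le> 2 * d * m * (N + 1)"
        by linarith
      with k show ?thesis
        by (rule power_increasing)
    qed (use k in simp)
    finally show "card (profiles d N k) \<le> (2 * d * m * (N + 1)) ^ m" .
  qed
  finally show ?thesis
    by simp
qed

section \<open>The probability estimate\<close>

lemma card_walks_with_profile_le:
  assumes d: "d \<ge> 1" and N: "N \<ge> 1" and "E \<subseteq> walks d N"
    and "\<And>xs. xs \<in> E \<Longrightarrow> local_time xs N = p"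
    and "\<And>xs. xs \<in> E \<Longrightarrow> dirichlet d (\<lambda>x. sqrt (real (local_time xs N x))) \<ge> D"
  shows "real (card E) \<le> (2 * real d) ^ N * exp (2 * ln (real N) + 1 - D / 2)"
proof -
  define B where "B = D / 2 - real N * ln (2 * real d) - 2 * ln (real N) - 1"
  have u_pos: "tilt N p x > 0" for x
    using N by (rule tilt_pos)
  have "exp B \<le> walk_weight d (tilt N p) xs" if "xs \<in> E" for xs
  proof -
    have "B \<le> ln (walk_weight d (tilt N p) xs)"
      using ln_walk_weight_tilt_ge [OF d _ N, of xs] assms(3-5) that unfolding B_def by force
    then show ?thesis
      using walk_weight_pos [OF d u_pos] by (simp add: ln_ge_iff)
  qed
  then have "real (card E) * exp B \<le> (\<Sum>xs\<in>E. walk_weight d (tilt N p) xs)"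
    using sum_mono [of E "\<lambda>_. exp B"] by simp
  also have "\<dots> \<le> (\<Sum>xs\<in>walks d N. walk_weight d (tilt N p) xs)"
    using walk_weight_pos [OF d u_pos]
    by (intro sum_mono2 finite_walks assms(3)) (simp add: less_imp_le)
  also have "\<dots> = 1"
    by (rule sum_walk_weight [OF d u_pos])
  finally have "real (card E) \<le> exp (- B)"
    by (simp add: exp_minus field_simps)
  also have "exp (- B) = exp (real N * ln (2 * real d)) * exp (2 * ln (real N) + 1 - D / 2)"
    by (simp add: B_def flip: exp_add)
  also have "exp (real N * ln (2 * real d)) = (2 * real d) ^ N"
    using d by (simp add: exp_of_nat_mult)
  finally show ?thesis .
qed

lemma card_le_card_image_mult:
  fixes f :: "'a \<Rightarrow> 'b" and B :: real
  assumes "finite E" "\<And>y. y \<in> f ` E \<Longrightarrow> real (card {x \<in> E. f x = y}) \<le> B"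
  shows "real (card E) \<le> real (card (f ` E)) * B"
proof -
  have "card E = card (\<Union>y\<in>f ` E. {x \<in> E. f x = y})"
    by (rule arg_cong [where f = card]) auto
  also have "\<dots> \<le> (\<Sum>y\<in>f ` E. card {x \<in> E. f x = y})"
    by (rule card_UN_le) (simp add: assms(1))
  finally have "real (card E) \<le> (\<Sum>y\<in>f ` E. real (card {x \<in> E. f x = y}))"
    by (simp flip: of_nat_sum)
  also have "\<dots> \<le> (\<Sum>y\<in>f ` E. B)"
    by (intro sum_mono assms(2))
  finally show ?thesis
    by simp
qed

lemma prob_high_energy_small_range_le:
  assumes d: "d \<ge> 1" and N: "N \<ge> 1"
  shows "measure_pmf.prob (SRW d N)
      {xs. dirichlet d (\<lambda>x. sqrt (real (local_time xs N x))) \<ge> D \<and> card (range_set xs N) \<le> m}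
    \<le> real ((m + 1) * (2 * d * m * (N + 1)) ^ m) * exp (2 * ln (real N) + 1 - D / 2)"
    (is "measure_pmf.prob _ ?A \<le> real ?P * ?C")
proof -
  define E where "E = walks d N \<inter> ?A"
  define prof where "prof xs = local_time xs N" for xs
  have E: "E \<subseteq> walks d N" "finite E"
    using finite_walks by (auto simp: E_def intro: finite_subset)
  have visited_le: "card (pos xs ` {..<N}) \<le> m" if "xs \<in> E" for xs
  proof -
    have "card (pos xs ` {..<N}) \<le> card (range_set xs N)"
      unfolding range_set_def by (intro card_mono) auto
    with that show ?thesis
      by (simp add: E_def)
  qed
  have "real (card E) \<le> real (card (prof ` E)) * ((2 * real d) ^ N * ?C)"
    using E by (intro card_le_card_image_mult card_walks_with_profile_le [OF d N])
      (auto simp: prof_def E_def)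
  also have "\<dots> \<le> real ?P * ((2 * real d) ^ N * ?C)"
  proof -
    have "real (card (prof ` E)) \<le> real ?P"
      unfolding prof_def using card_local_time_profiles_le [OF d N E(1) visited_le]
      by (rule of_nat_mono)
    then show ?thesis
      by (rule mult_right_mono) simp
  qed
  finally have "real (card E) / (2 * real d) ^ N \<le> real ?P * ?C"
    using d by (simp add: divide_le_eq mult_ac)
  moreover have "measure_pmf.prob (SRW d N) ?A = real (card E) / (2 * real d) ^ N"
  proof -
    have "walks d N \<noteq> {}"
      using card_walks [of d N] d by auto
    then show ?thesis
      unfolding SRW_def E_def by (simp add: measure_pmf_of_set finite_walks card_walks)
  qed
  ultimately show ?thesis
    by simp
qed

lemma profile_base_le_power:
  fixes n m :: nat and c :: real
  assumes "real n \<ge> 4 * real d * c" "1 \<le> n" "real m \<le> c * real n ^ d"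
  shows "real (2 * d * m * (n ^ (d + 2) + 1)) \<le> real n ^ (2 * d + 3)"
proof -
  have N1: "1 \<le> real n ^ (d + 2)"
    using assms(2) by (intro one_le_power) simp
  have "real (2 * d * m * (n ^ (d + 2) + 1)) = 2 * real d * real m * (real n ^ (d + 2) + 1)"
    by (simp only: of_nat_mult of_nat_add of_nat_power) simp
  also have "\<dots> \<le> 2 * real d * (c * real n ^ d) * (2 * real n ^ (d + 2))"
    using assms(3) N1 by (intro mult_mono) auto
  also have "\<dots> = (4 * real d * c) * (real n ^ d * real n ^ (d + 2))"
    by (simp add: algebra_simps)
  also have "\<dots> \<le> real n * (real n ^ d * real n ^ (d + 2))"
    using assms(1) by (intro mult_right_mono) auto
  also have "\<dots> = real n ^ (1 + d + (d + 2))"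
    by (simp only: power_add power_one_right mult.assoc)
  also have "1 + d + (d + 2) = 2 * d + 3"
    by simp
  finally show ?thesis .
qed

lemma ln_profile_count_le:
  fixes n m :: nat and c :: real
  assumes d: "d \<ge> 3" and c: "c \<ge> 1" and n: "real n \<ge> 4 * real d * c" "n \<ge> 2 * d + 5"
    and m: "1 \<le> m" "real m \<le> c * real n ^ d"
  defines "N \<equiv> n ^ (d + 2)"
  shows "ln (real ((m + 1) * (2 * d * m * (N + 1)) ^ m)) + 2 * ln (real N) + 1
           \<le> 4 * real d * c * real n ^ d * ln (real n)"
proof -
  define l where "l = ln (real n)"
  define M where "M = c * real n ^ d"
  define b where "b = 2 * d * m * (N + 1)"
  have l: "l \<ge> 1"
  proof -
    have "exp 1 \<le> real n"
      using exp_le n(2) by linarith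
    then show ?thesis
      unfolding l_def using n(2) by (subst ln_ge_iff) auto
  qed
  have "real n \<le> real n ^ d"
    using n(2) d by (intro power_increasing [of 1 d, simplified]) auto
  moreover have "real n ^ d \<le> M"
    unfolding M_def using c mult_right_mono [of 1 c "real n ^ d"] by simp
  ultimately have n_le_M: "real n \<le> M"
    by linarith
  have m_le_M: "real m \<le> M"
    using m(2) by (simp add: M_def)
  have "0 < b"
    using m(1) d by (simp add: b_def)
  then have b1: "real b \<ge> 1"
    by (simp add: Suc_le_eq)
  have "ln (real b) \<le> ln (real n ^ (2 * d + 3))"
    unfolding b_def N_def using b1 n(2)
    by (intro ln_mono profile_base_le_power [OF n(1) _ m(2)]) (auto simp: b_def N_def)
  also have "\<dots> = (2 * real d + 3) * l"
    by (simp add: l_def ln_realpow)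
  finally have ln_b: "ln (real b) \<le> (2 * real d + 3) * l" .
  have "ln (real (m + 1)) \<le> real m"
    using ln_add_one_self_le_self [of "real m"] by (simp add: add.commute)
  also have "\<dots> \<le> M * l"
    using m_le_M l n_le_M mult_left_mono [of 1 l M] by simp
  finally have first: "ln (real (m + 1)) \<le> M * l" .
  have "real m * ln (real b) \<le> M * ((2 * real d + 3) * l)"
    using m_le_M ln_b b1 by (intro mult_mono) auto
  then have second: "real m * ln (real b) \<le> (2 * real d + 3) * (M * l)"
    by (simp add: algebra_simps)
  have "2 * ln (real N) + 1 \<le> (2 * real d + 5) * l"
    unfolding N_def l_def of_nat_power ln_realpow using l by (simp add: l_def algebra_simps)
  also have "\<dots> \<le> M * l"
    using n(2) n_le_M l by (intro mult_right_mono) auto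
  finally have third: "2 * ln (real N) + 1 \<le> M * l" .
  have "ln (real ((m + 1) * b ^ m)) = ln (real (m + 1) * real b ^ m)"
    by (simp only: of_nat_mult of_nat_power)
  also have "\<dots> = ln (real (m + 1)) + real m * ln (real b)"
    using b1 by (simp add: ln_mult_pos ln_realpow)
  finally have "ln (real ((m + 1) * b ^ m)) = ln (real (m + 1)) + real m * ln (real b)" .
  moreover have "(2 * real d + 5) * (M * l) \<le> 4 * real d * (M * l)"
    using d l n_le_M n(2) by (intro mult_right_mono) auto
  ultimately have "ln (real ((m + 1) * b ^ m)) + 2 * ln (real N) + 1 \<le> 4 * real d * (M * l)"
    using first second third by (simp add: algebra_simps)
  then show ?thesis
    by (simp add: b_def M_def l_def algebra_simps)
qed

lemma prob_high_energy_small_range_le_exp: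
  fixes n :: nat and c \<kappa> :: real
  assumes d: "d \<ge> 3" and c: "c \<ge> 1" and n: "real n \<ge> 4 * real d * c" "n \<ge> 2 * d + 5"
  defines "N \<equiv> n ^ (d + 2)"
  shows "measure_pmf.prob (SRW d N)
       {xs. dirichlet d (\<lambda>x. sqrt (real (local_time xs N x))) \<ge> \<kappa> * real n ^ d * ln (real n)
            \<and> real (card (range_set xs N)) \<le> c * real n ^ d}
     \<le> exp (- ((\<kappa> / 2 - 4 * real d * c) * real n ^ d * ln (real n)))"
proof -
  define D where "D = \<kappa> * real n ^ d * ln (real n)"
  define m where "m = nat \<lfloor>c * real n ^ d\<rfloor>"
  define P where "P = (m + 1) * (2 * d * m * (N + 1)) ^ m"
  have "1 \<le> real n ^ d"
    using n(2) by (intro one_le_power) simp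
  then have "1 \<le> c * real n ^ d"
    using c mult_mono [of 1 c 1 "real n ^ d"] by simp
  then have m: "1 \<le> m" "real m \<le> c * real n ^ d"
    unfolding m_def by (auto intro: le_nat_floor of_nat_floor)
  have "1 \<le> N"
    unfolding N_def using n(2) by (intro one_le_power) simp
  have "measure_pmf.prob (SRW d N)
       {xs. dirichlet d (\<lambda>x. sqrt (real (local_time xs N x))) \<ge> D
            \<and> real (card (range_set xs N)) \<le> c * real n ^ d}
     \<le> measure_pmf.prob (SRW d N)
       {xs. dirichlet d (\<lambda>x. sqrt (real (local_time xs N x))) \<ge> D \<and> card (range_set xs N) \<le> m}"
    unfolding m_def by (intro measure_pmf.finite_measure_mono) (auto intro: le_nat_floor)
  also have "\<dots> \<le> real P * exp (2 * ln (real N) + 1 - D / 2)"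
    unfolding P_def using d \<open>1 \<le> N\<close> by (intro prob_high_energy_small_range_le) auto
  also have "\<dots> = exp (ln (real P) + (2 * ln (real N) + 1 - D / 2))"
  proof -
    have "0 < P"
      using m(1) d by (simp add: P_def)
    then show ?thesis
      by (simp add: exp_add)
  qed
  also have "\<dots> \<le> exp (4 * real d * c * real n ^ d * ln (real n) - D / 2)"
    using ln_profile_count_le [OF d c n m] by (simp add: P_def N_def)
  also have "\<dots> = exp (- ((\<kappa> / 2 - 4 * real d * c) * real n ^ d * ln (real n)))"
    by (simp add: D_def algebra_simps)
  finally show ?thesis
    unfolding D_def .
qed

theorem proposition4p1:
  fixes d :: nat and c \<kappa> :: real
  assumes "d \<ge> 3" and "c \<ge> 1" and "\<kappa> \<ge> 1" and "\<kappa> / 2 - 4 * real d * c > 0"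
  shows "eventually (\<lambda>n::nat.
     measure_pmf.prob (SRW d (n ^ (d + 2)))
       {xs. dirichlet d (\<lambda>x. sqrt (real (local_time xs (n ^ (d + 2)) x)))
              \<ge> \<kappa> * real n ^ d * ln (real n)
            \<and> real (card (range_set xs (n ^ (d + 2)))) \<le> c * real n ^ d}
     \<le> exp (- ((\<kappa> / 2 - 4 * real d * c) * real n ^ d * ln (real n)))) sequentially"
proof -
  (* The bound holds for every \<kappa>; the hypotheses on \<kappa> only make it non-trivial. *)
  obtain n0 :: nat where n0: "4 * real d * c \<le> real n0"
    using real_arch_simple by blast
  have "eventually (\<lambda>n. n \<ge> max n0 (2 * d + 5)) sequentially"
    by (rule eventually_ge_at_top)
  then have "eventually (\<lambda>n. real n \<ge> 4 * real d * c \<and> n \<ge> 2 * d + 5) sequentially"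
  proof eventually_elim
    case (elim n)
    then have "real n0 \<le> real n"
      by simp
    with n0 elim show ?case
      by simp
  qed
  then show ?thesis
    by eventually_elim (rule prob_high_energy_small_range_le_exp, use assms in auto)
qed

end
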